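(* Let $k\ge 2$, $n\neq 2k$, $G\in\mathcal{M}_k(n,s)$, and let $i<j$ be vertices of $G$. Then: (i) if $\mathrm{sh}_{ij}(G)\in\mathrm{Cov}_k(n,s)$, then $G\in\mathrm{Cov}_k(n,s)$; (ii) if $\mathrm{sh}_{ij}(G)\in\mathrm{Cl}_k(n,s)$, then $G\in\mathrm{Cl}_k(n,s)$.
   Context: A $k$-uniform hypergraph ($k$-graph) $G=(V,E)$ consists of a finite vertex set $V\subseteq\mathbb{N}$ and a family $E$ of $k$-element subsets of $V$ (edges). A matching is a family of pairwise disjoint edges; $\mu(G)$ is the size of a largest matching in $G$. Let $\mathcal{H}_k(n,s)$ be the set of all $k$-graphs $G=(V,E)$ with $|V|=n$ and $\mu(G)=s$; let $\mu_k(n,s)=\max\{|E(G)|: G\in\mathcal{H}_k(n,s)\}$ and $\mathcal{M}_k(n,s)=\{G\in\mathcal{H}_k(n,s): |E(G)|=\mu_k(n,s)\}$. $\mathrm{Cov}_k(n,s)$ is the family of $k$-graphs $G=(V,E)$ with $|V|=n$ such that for some $S\subseteq V$ with $|S|=s$, $E=\{e\subseteq V: |e|=k,\ e\cap S\neq\emptyset\}$. $\mathrm{Cl}_k(n,s)$ is the family of $k$-graphs $G=(V,E)$ with $|V|=n$ such that for some $T\subseteq V$ with $|T|=ks+k-1$, $E=\{e\subseteq T: |e|=k\}$. For vertices $i<j$, the $(i,j)$-shift $\mathrm{sh}_{ij}(G)$ is the $k$-graph on $V$ obtained from $G$ by replacing each edge $e\in E$ with $j\in e$, $i\notin e$ and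 $(e\setminus\{j\})\cup\{i\}\notin E$ by the set $(e\setminus\{j\})\cup\{i\}$ (all other edges are kept). *)

theory Defs
  imports Main
begin

type_synonym hgraph = "nat set \<times> nat set set"

definition kgraph :: "nat \<Rightarrow> hgraph \<Rightarrow> bool" where
  "kgraph k G \<longleftrightarrow> finite (fst G) \<and> (\<forall>e\<in>snd G. e \<subseteq> fst G \<and> card e = k)"

definition matching :: "nat set set \<Rightarrow> bool" where
  "matching M \<longleftrightarrow> pairwise disjnt M"

definition matching_number :: "hgraph \<Rightarrow> nat" where
  "matching_number G = Max {card M | M. M \<subseteq> snd G \<and> matching M}"

definition Hk :: "nat \<Rightarrow> nat \<Rightarrow> nat \<Rightarrow> hgraph set" where
  "Hk k n s = {G. kgraph k G \<and> card (fst G) = n \<and> matching_number G = s}"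

definition muk :: "nat \<Rightarrow> nat \<Rightarrow> nat \<Rightarrow> nat" where
  "muk k n s = Max ((\<lambda>G. card (snd G)) ` Hk k n s)"

definition Mk :: "nat \<Rightarrow> nat \<Rightarrow> nat \<Rightarrow> hgraph set" where
  "Mk k n s = {G \<in> Hk k n s. card (snd G) = muk k n s}"

definition Cov :: "nat \<Rightarrow> nat \<Rightarrow> nat \<Rightarrow> hgraph set" where
  "Cov k n s = {(V, E). finite V \<and> card V = n \<and>
     (\<exists>S. S \<subseteq> V \<and> card S = s \<and> E = {e. e \<subseteq> V \<and> card e = k \<and> e \<inter> S \<noteq> {}})}"

definition Cl :: "nat \<Rightarrow> nat \<Rightarrow> nat \<Rightarrow> hgraph set" where
  "Cl k n s = {(V, E). finite V \<and> card V = n \<and>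
     (\<exists>T. T \<subseteq> V \<and> card T = k * s + k - 1 \<and> E = {e. e \<subseteq> T \<and> card e = k})}"

definition shift :: "nat \<Rightarrow> nat \<Rightarrow> hgraph \<Rightarrow> hgraph" where
  "shift i j G = (let V = fst G; E = snd G;
      moved = (\<lambda>e. j \<in> e \<and> i \<notin> e \<and> insert i (e - {j}) \<notin> E)
    in (V, {e \<in> E. \<not> moved e} \<union> {insert i (e - {j}) | e. e \<in> E \<and> moved e}))"

end

theory Submission
  imports Defs "HOL-Combinatorics.Transposition"
begin

text \<open>
  Let F be the shifted edge family. For a set A avoiding i and j the shift changes the pair
  A + i, A + j only if exactly one of them is an edge, and then F contains A + i but not A + j.
  When F is a covering or a clique family, these ``pending'' sets A are exactly the
  (k - 1)-subsets of a set W of more than 2(k - 1) vertices (outside S and j, resp. inside T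
  minus i). If G resolved two of them differently, an exchange argument would give disjoint
  X, Y \<subseteq> W with X + i and Y + j edges of G, and together with s - 1 edges of F far from them
  these would form a matching of size s + 1. So G resolves all of them alike: G is F itself or
  the image of F under the transposition (i j), and both are again covering (clique) families.
  The degenerate cases are settled by extremality: a graph with fewer than (s + 1)k vertices is
  complete, and for s = 1 and n > 2k the star beats the clique.
\<close>

section \<open>Shifting a pair of vertices\<close>

definition shift_edges :: "nat \<Rightarrow> nat \<Rightarrow> nat set set \<Rightarrow> nat set set" where
  "shift_edges i j E = {e \<in> E. \<not> (j \<in> e \<and> i \<notin> e \<and> insert i (e - {j}) \<notin> E)} \<union>
     {insert i (e - {j}) | e. e \<in> E \<and> j \<in> e \<and> i \<notin> e \<and> insert i (e - {j}) \<notin> E}"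

lemma shift_eq_shift_edges: "shift i j G = (fst G, shift_edges i j (snd G))"
  by (simp add: shift_def shift_edges_def Let_def)

lemma shift_edges_avoiding: "i \<notin> e \<Longrightarrow> j \<notin> e \<Longrightarrow> e \<in> shift_edges i j E \<longleftrightarrow> e \<in> E"
  unfolding shift_edges_def by auto

lemma shift_edges_containing_both:
  "i \<noteq> j \<Longrightarrow> i \<in> e \<Longrightarrow> j \<in> e \<Longrightarrow> e \<in> shift_edges i j E \<longleftrightarrow> e \<in> E"
  unfolding shift_edges_def by auto

lemma shift_edges_insert_second:
  assumes "i \<noteq> j" "i \<notin> A" "j \<notin> A"
  shows "insert j A \<in> shift_edges i j E \<longleftrightarrow> insert j A \<in> E \<and> insert i A \<in> E"
proof -
  have "insert j A - {j} = A" using assms by auto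
  then show ?thesis unfolding shift_edges_def using assms by auto
qed

lemma shift_edges_insert_first:
  assumes ij: "i \<noteq> j" and A: "i \<notin> A" "j \<notin> A"
  shows "insert i A \<in> shift_edges i j E \<longleftrightarrow> insert i A \<in> E \<or> insert j A \<in> E"
proof
  assume "insert i A \<in> shift_edges i j E"
  then consider "insert i A \<in> E"
    | e where "e \<in> E" "j \<in> e" "i \<notin> e" "insert i A = insert i (e - {j})"
    unfolding shift_edges_def by blast
  then show "insert i A \<in> E \<or> insert j A \<in> E"
  proof cases
    case 2
    then have "A = e - {j}" using A by (metis Diff_iff insertI1 insert_ident)
    then show ?thesis using 2 by (metis insert_Diff)
  qed simp
next
  have Aj: "insert j A - {j} = A" using A by auto
  assume "insert i A \<in> E \<or> insert j A \<in> E"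
  then show "insert i A \<in> shift_edges i j E"
  proof
    assume "insert j A \<in> E"
    show ?thesis
    proof (cases "insert i A \<in> E")
      case False
      then have "\<exists>e. insert i A = insert i (e - {j}) \<and> e \<in> E \<and> j \<in> e \<and> i \<notin> e \<and>
          insert i (e - {j}) \<notin> E"
        using \<open>insert j A \<in> E\<close> A Aj ij by (intro exI[of _ "insert j A"]) simp
      then show ?thesis unfolding shift_edges_def by blast
    qed (simp add: shift_edges_def ij)
  qed (simp add: shift_edges_def ij)
qed

lemma shift_edges_eq_self:
  assumes "\<And>A. i \<notin> A \<Longrightarrow> j \<notin> A \<Longrightarrow> insert j A \<in> E \<Longrightarrow> insert i A \<in> E"
  shows "shift_edges i j E = E"
proof -
  have "insert i (e - {j}) \<in> E" if "e \<in> E" "j \<in> e" "i \<notin> e" for e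
    using assms[of "e - {j}"] that by (simp add: insert_absorb)
  then show ?thesis unfolding shift_edges_def by auto
qed

lemma shift_edges_eq_self_if_symmetric:
  assumes "i \<noteq> j" and "\<And>A. i \<notin> A \<Longrightarrow> j \<notin> A \<Longrightarrow>
      insert i A \<in> shift_edges i j E \<Longrightarrow> insert j A \<in> shift_edges i j E"
  shows "shift_edges i j E = E"
  using assms by (intro shift_edges_eq_self) (metis shift_edges_insert_first shift_edges_insert_second)

lemma card_shift_edges:
  assumes "finite E" "i \<noteq> j"
  shows "card (shift_edges i j E) = card E"
proof -
  define moved where "moved = {e \<in> E. j \<in> e \<and> i \<notin> e \<and> insert i (e - {j}) \<notin> E}"
  define f where "f e = insert i (e - {j})" for e
  have split: "shift_edges i j E = (E - moved) \<union> f ` moved"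
    unfolding shift_edges_def moved_def f_def by auto
  have "inj_on f moved"
  proof (rule inj_onI)
    fix x y assume "x \<in> moved" "y \<in> moved" "f x = f y"
    then have "x - {j} = y - {j}" "j \<in> x" "j \<in> y"
      unfolding moved_def f_def by (auto simp: insert_ident)
    then show "x = y" by (metis insert_Diff)
  qed
  moreover have "(E - moved) \<inter> f ` moved = {}" unfolding moved_def f_def by auto
  moreover have "finite moved" "moved \<subseteq> E" using assms unfolding moved_def by auto
  ultimately have "card (shift_edges i j E) = card (E - moved) + card moved"
    unfolding split using assms by (simp add: card_Un_disjoint card_image)
  also have "\<dots> = card E"
    using \<open>moved \<subseteq> E\<close> assms by (metis card_Diff_subset card_mono finite_subset le_add_diff_inverse2)
  finally show ?thesis .
qed

lemma shift_edges_eq_transpose_image: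
  assumes ij: "i \<noteq> j"
    and pending: "\<And>A. i \<notin> A \<Longrightarrow> j \<notin> A \<Longrightarrow> insert i A \<in> shift_edges i j E \<Longrightarrow>
      insert j A \<notin> shift_edges i j E \<Longrightarrow> insert j A \<in> E"
  shows "E = image (transpose i j) ` shift_edges i j E"
proof -
  let ?F = "shift_edges i j E" and ?\<tau> = "image (transpose i j)"
  have swap_pair: "insert j A \<in> E \<longleftrightarrow> insert i A \<in> ?F" "insert i A \<in> E \<longleftrightarrow> insert j A \<in> ?F"
    if "i \<notin> A" "j \<notin> A" for A
    using that ij pending[OF that] shift_edges_insert_first[OF ij that, of E]
      shift_edges_insert_second[OF ij that, of E] by blast+
  have in_E_iff: "e \<in> E \<longleftrightarrow> ?\<tau> e \<in> ?F" for e
  proof (cases "i \<in> e \<longleftrightarrow> j \<in> e")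
    case True
    then show ?thesis
      using shift_edges_avoiding shift_edges_containing_both[OF ij] by auto
  next
    case False
    define A where "A = e - {i, j}"
    have A: "i \<notin> A" "j \<notin> A" unfolding A_def by auto
    have "?\<tau> A = A" using A by simp
    from False consider "e = insert j A" | "e = insert i A"
      unfolding A_def by blast
    then show ?thesis
      by cases (simp_all add: \<open>?\<tau> A = A\<close> swap_pair[OF A])
  qed
  have "?\<tau> (?\<tau> e) = e" for e by (simp add: image_image)
  then show ?thesis using in_E_iff by (metis (no_types, lifting) image_iff subsetI subset_antisym)
qed

lemma shift_edges_undo:
  assumes ij: "i \<noteq> j"
    and pending: "\<And>A. i \<notin> A \<Longrightarrow> j \<notin> A \<Longrightarrow> insert i A \<in> shift_edges i j E \<Longrightarrow>
      insert j A \<notin> shift_edges i j E \<Longrightarrow> A \<in> \<A>"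
    and uniform: "(\<forall>A\<in>\<A>. insert j A \<notin> E) \<or> (\<forall>A\<in>\<A>. insert j A \<in> E)"
  shows "E = shift_edges i j E \<or> E = image (transpose i j) ` shift_edges i j E"
  using uniform
proof
  assume none: "\<forall>A\<in>\<A>. insert j A \<notin> E"
  have "shift_edges i j E = E"
  proof (rule shift_edges_eq_self)
    fix A assume A: "i \<notin> A" "j \<notin> A" "insert j A \<in> E"
    show "insert i A \<in> E"
      using A none pending[of A] shift_edges_insert_first[OF ij A(1,2), of E]
        shift_edges_insert_second[OF ij A(1,2), of E] by blast
  qed
  then show ?thesis by simp
next
  assume "\<forall>A\<in>\<A>. insert j A \<in> E"
  then show ?thesis using pending by (intro disjI2 shift_edges_eq_transpose_image[OF ij]) blast
qed

section \<open>Covering and clique families under vertex permutations\<close>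

lemma image_set_Collect_bij:
  assumes "bij f"
  shows "image f ` {e. P e} = {e. P (f -` e)}"
proof -
  have vimage_image: "f -` (f ` e) = e" for e
    using assms by (simp add: bij_is_inj inj_vimage_image_eq)
  have image_vimage: "f ` (f -` e) = e" for e
    using assms by (simp add: bij_is_surj surj_image_vimage_eq)
  show ?thesis
    by (rule set_eqI) (metis (mono_tags) image_iff mem_Collect_eq vimage_image image_vimage)
qed

lemma bij_vimage_subset_iff: "bij f \<Longrightarrow> f -` e \<subseteq> A \<longleftrightarrow> e \<subseteq> f ` A"
  by (metis bij_is_surj image_mono image_vimage_eq inf_top.right_neutral vimage_mono
      bij_is_inj inj_vimage_image_eq)

lemma bij_card_image: "bij f \<Longrightarrow> card (f ` A) = card A"
  by (meson bij_is_inj card_image inj_on_subset subset_UNIV)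

lemma bij_card_vimage: "bij f \<Longrightarrow> card (f -` A) = card A"
  by (simp add: bij_is_inj bij_is_surj card_vimage_inj)

lemma Cov_bij_image:
  assumes f: "bij f" "f ` V = V" and G: "(V, E) \<in> Cov k n s"
  shows "(V, image f ` E) \<in> Cov k n s"
proof -
  obtain S where S: "S \<subseteq> V" "card S = s" "E = {e. e \<subseteq> V \<and> card e = k \<and> e \<inter> S \<noteq> {}}"
    using G unfolding Cov_def by auto
  have "f -` e \<inter> S \<noteq> {} \<longleftrightarrow> e \<inter> f ` S \<noteq> {}" for e by auto
  then have "image f ` E = {e. e \<subseteq> V \<and> card e = k \<and> e \<inter> f ` S \<noteq> {}}"
    unfolding S(3) image_set_Collect_bij[OF f(1)]
    using f by (simp add: bij_vimage_subset_iff bij_card_vimage)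
  moreover have "f ` S \<subseteq> V" "card (f ` S) = s"
    using S f by (auto simp: bij_card_image)
  ultimately show ?thesis using G unfolding Cov_def by auto
qed

lemma Cl_bij_image:
  assumes f: "bij f" "f ` V = V" and G: "(V, E) \<in> Cl k n s"
  shows "(V, image f ` E) \<in> Cl k n s"
proof -
  obtain T where T: "T \<subseteq> V" "card T = k * s + k - 1" "E = {e. e \<subseteq> T \<and> card e = k}"
    using G unfolding Cl_def by auto
  have "f ` T \<subseteq> V" "card (f ` T) = k * s + k - 1"
    using T f by (auto simp: bij_card_image)
  moreover have "image f ` E = {e. e \<subseteq> f ` T \<and> card e = k}"
    unfolding T(3) image_set_Collect_bij[OF f(1)]
    using f by (simp add: bij_vimage_subset_iff bij_card_vimage)
  ultimately show ?thesis using G unfolding Cl_def by auto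
qed

section \<open>Matchings and extremal graphs\<close>

lemma kgraph_finite_edges: "kgraph k G \<Longrightarrow> finite (snd G)"
  unfolding kgraph_def by (meson finite_Pow_iff finite_subset subsetI PowI)

lemma finite_matching_cards: "kgraph k G \<Longrightarrow> finite {card M | M. M \<subseteq> snd G \<and> matching M}"
proof -
  assume "kgraph k G"
  then have "card M \<le> card (snd G)" if "M \<subseteq> snd G" for M
    using kgraph_finite_edges that by (intro card_mono)
  then have "{card M | M. M \<subseteq> snd G \<and> matching M} \<subseteq> {..card (snd G)}" by auto
  then show ?thesis by (rule finite_subset) simp
qed

lemma card_le_matching_number:
  "kgraph k G \<Longrightarrow> M \<subseteq> snd G \<Longrightarrow> matching M \<Longrightarrow> card M \<le> matching_number G"
  unfolding matching_number_def by (rule Max_ge[OF finite_matching_cards]) blast+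

lemma matching_number_attained:
  assumes "kgraph k G"
  obtains M where "M \<subseteq> snd G" "matching M" "card M = matching_number G"
proof -
  have "matching {}" unfolding matching_def by simp
  then have "{card M | M. M \<subseteq> snd G \<and> matching M} \<noteq> {}" by blast
  then have "matching_number G \<in> {card M | M. M \<subseteq> snd G \<and> matching M}"
    unfolding matching_number_def by (rule Max_in[OF finite_matching_cards[OF assms]])
  then show ?thesis using that by auto
qed

lemma card_add_two_le_matching_number:
  assumes kg: "kgraph k G" and M: "M \<subseteq> snd G" "finite M" "matching M"
    and ab: "a \<in> snd G" "b \<in> snd G" "a \<noteq> {}" "b \<noteq> {}" "disjnt a b"
    and disj: "\<forall>e\<in>M. disjnt e a \<and> disjnt e b"
  shows "card M + 2 \<le> matching_number G"
proof -
  have new: "a \<notin> M" "b \<notin> M" "a \<noteq> b" using disj ab by (auto simp: disjnt_def)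
  have "matching (insert a (insert b M))"
    using M(3) disj ab unfolding matching_def pairwise_insert by (auto simp: disjnt_sym)
  then have "card (insert a (insert b M)) \<le> matching_number G"
    using M ab by (intro card_le_matching_number[OF kg]) auto
  then show ?thesis using new M(2) by simp
qed

lemma card_edges_le_muk:
  assumes "H \<in> Hk k n s"
  shows "card (snd H) \<le> muk k n s"
proof -
  have "card (snd G) \<le> n choose k" if "G \<in> Hk k n s" for G
  proof -
    have kg: "kgraph k G" and n: "card (fst G) = n" using that unfolding Hk_def by auto
    then have "finite (fst G)" "snd G \<subseteq> {e. e \<subseteq> fst G \<and> card e = k}"
      unfolding kgraph_def by auto
    then have "card (snd G) \<le> card {e. e \<subseteq> fst G \<and> card e = k}" by (intro card_mono) auto
    then show ?thesis using n \<open>finite (fst G)\<close> by (simp add: n_subsets)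
  qed
  then have "(\<lambda>G. card (snd G)) ` Hk k n s \<subseteq> {..n choose k}" by auto
  then have "finite ((\<lambda>G. card (snd G)) ` Hk k n s)" by (rule finite_subset) simp
  then show ?thesis unfolding muk_def by (rule Max_ge) (use assms in blast)
qed

lemma card_matching_mult_le:
  assumes kg: "kgraph k G" and M: "M \<subseteq> snd G" "matching M"
  shows "k * card M \<le> card (fst G)"
proof -
  have fin: "finite (fst G)" and edges: "\<And>e. e \<in> snd G \<Longrightarrow> e \<subseteq> fst G \<and> card e = k"
    using kg unfolding kgraph_def by auto
  have "finite e" if "e \<in> M" for e using that M(1) edges fin by (meson finite_subset subsetD)
  then have "card (\<Union>M) = (\<Sum>e\<in>M. card e)"
    using M(2) unfolding matching_def by (intro card_Union_disjoint)
  also have "\<dots> = (\<Sum>e\<in>M. k)" using M(1) edges by (intro sum.cong) auto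
  also have "\<dots> = k * card M" by simp
  finally have "k * card M = card (\<Union>M)" by simp
  also have "\<dots> \<le> card (fst G)" using M(1) edges fin by (intro card_mono) auto
  finally show ?thesis .
qed

lemma Mk_complete_if_few_vertices:
  assumes G: "(V, E) \<in> Mk k n s" and few: "n < (s + 1) * k"
  shows "E = {e. e \<subseteq> V \<and> card e = k}"
proof -
  let ?K = "{e. e \<subseteq> V \<and> card e = k}"
  have kg: "kgraph k (V, E)" and n: "card V = n" and s: "matching_number (V, E) = s"
    and extremal: "card E = muk k n s"
    using G unfolding Mk_def Hk_def by auto
  have fin: "finite V" and EK: "E \<subseteq> ?K" using kg unfolding kgraph_def by auto
  have kgK: "kgraph k (V, ?K)" unfolding kgraph_def using fin by auto
  have "matching_number (V, ?K) = s"
  proof (rule antisym)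
    obtain M where M: "M \<subseteq> ?K" "matching M" "card M = matching_number (V, ?K)"
      using matching_number_attained[OF kgK] by auto
    have "k * card M \<le> n" using card_matching_mult_le[OF kgK, of M] M n by simp
    then have "k * card M < k * (s + 1)" using few by (simp add: mult.commute)
    then have "card M < s + 1" by (rule mult_less_cancel1[THEN iffD1, THEN conjunct2])
    then show "matching_number (V, ?K) \<le> s" using M(3) by simp
  next
    obtain M where "M \<subseteq> E" "matching M" "card M = s"
      using matching_number_attained[OF kg] s by auto
    then show "s \<le> matching_number (V, ?K)" using EK card_le_matching_number[OF kgK] by force
  qed
  then have "card ?K \<le> card E"
    using card_edges_le_muk[of "(V, ?K)"] kgK n extremal unfolding Hk_def by simp
  then show ?thesis using EK fin by (intro card_seteq) auto
qed

lemma card_ksubsets_containing: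
  assumes "finite V" "v \<in> V" "k \<ge> 1"
  shows "card {e. e \<subseteq> V \<and> card e = k \<and> v \<in> e} = (card V - 1) choose (k - 1)"
proof -
  let ?B = "{b. b \<subseteq> V - {v} \<and> card b = k - 1}"
  have "{e. e \<subseteq> V \<and> card e = k \<and> v \<in> e} = insert v ` ?B"
  proof (intro set_eqI iffI)
    fix e assume e: "e \<in> {e. e \<subseteq> V \<and> card e = k \<and> v \<in> e}"
    then have "e - {v} \<in> ?B" "e = insert v (e - {v})"
      using assms(1) by (auto simp: finite_subset)
    then show "e \<in> insert v ` ?B" by blast
  next
    fix e assume "e \<in> insert v ` ?B"
    then obtain b where b: "b \<subseteq> V - {v}" "card b = k - 1" "e = insert v b" by blast
    then have "finite b" "v \<notin> b" using assms(1) finite_subset by auto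
    then show "e \<in> {e. e \<subseteq> V \<and> card e = k \<and> v \<in> e}"
      using assms b by auto
  qed
  moreover have "inj_on (insert v) ?B"
    by (rule inj_onI) (auto simp: insert_ident)
  ultimately show ?thesis
    using assms by (simp add: card_image n_subsets)
qed

lemma binomial_le_muk_one:
  assumes "1 \<le> k" "k \<le> n"
  shows "(n - 1) choose (k - 1) \<le> muk k n 1"
proof -
  let ?V = "{..<n}"
  define St where "St = {e. e \<subseteq> ?V \<and> card e = k \<and> 0 \<in> e}"
  have kg: "kgraph k (?V, St)" unfolding kgraph_def St_def by auto
  have card_St: "card St = (n - 1) choose (k - 1)"
    unfolding St_def using assms by (simp add: card_ksubsets_containing)
  have "matching_number (?V, St) = 1"
  proof (rule antisym)
    obtain M where M: "M \<subseteq> St" "matching M" "card M = matching_number (?V, St)"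
      using matching_number_attained[OF kg] by auto
    have "finite M" using M(1) kgraph_finite_edges[OF kg] finite_subset by auto
    moreover have "\<forall>a\<in>M. \<forall>b\<in>M. a = b"
      using M(1,2) unfolding St_def matching_def pairwise_def disjnt_def by blast
    ultimately have "card M \<le> Suc 0" by (simp add: card_le_Suc0_iff_eq)
    then show "matching_number (?V, St) \<le> 1" using M(3) by simp
  next
    have "St \<noteq> {}" using card_St assms by (metis card.empty zero_less_binomial_iff diff_le_mono
          less_irrefl)
    then obtain e where "e \<in> St" by blast
    then show "1 \<le> matching_number (?V, St)"
      using card_le_matching_number[OF kg, of "{e}"] unfolding matching_def by auto
  qed
  then have "card St \<le> muk k n 1"
    using kg by (intro card_edges_le_muk[of "(?V, St)", simplified]) (simp add: Hk_def)
  then show ?thesis using card_St by simp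
qed

lemma binomial_clique_lt_star:
  assumes k: "k \<ge> 2" and n: "n > 2 * k"
  shows "(2 * k - 1) choose k < (n - 1) choose (k - 1)"
proof -
  obtain q where q: "k = q + 2" using k by (metis add.commute le_Suc_ex)
  have "(2 * k - 1) choose k = (2 * k - 1) choose (k - 1)"
    using k by (subst binomial_symmetric) auto
  also have "\<dots> < 2 * k choose (k - 1)"
    using q by (simp add: numeral_eq_Suc)
  also have "\<dots> \<le> (n - 1) choose (k - 1)"
    using n by (intro binomial_right_mono) simp
  finally show ?thesis .
qed

lemma binomial_lt_muk_one:
  assumes "k \<ge> 2" "2 * k < n"
  shows "(2 * k - 1) choose k < muk k n 1"
  using binomial_clique_lt_star[OF assms] binomial_le_muk_one[of k n] assms by simp

section \<open>Undoing the shift\<close>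

text \<open>Exchange elements one at a time to walk from A0 towards A1; at the first change of P the
  two current sets have a union of r + 1 elements, and an r-set avoiding both separates them.\<close>

lemma disjoint_subsets_separating:
  assumes W: "finite W" "2 * r < card W"
    and A0: "A0 \<subseteq> W" "card A0 = r" "P A0" and A1: "A1 \<subseteq> W" "card A1 = r" "\<not> P A1"
  obtains X Y where "X \<subseteq> W" "Y \<subseteq> W" "card X = r" "card Y = r" "X \<inter> Y = {}" "\<not> P X" "P Y"
proof -
  let ?goal = "\<exists>X Y. X \<subseteq> W \<and> Y \<subseteq> W \<and> card X = r \<and> card Y = r \<and> X \<inter> Y = {} \<and> \<not> P X \<and> P Y"
  have adjacent: ?goal
    if A: "A \<subseteq> W" "card A = r" "P A" and C: "C \<subseteq> W" "card C = r" "\<not> P C"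
      and AC: "card (A \<union> C) \<le> r + 1" for A C
  proof -
    have "card (W - (A \<union> C)) = card W - card (A \<union> C)"
      using A C W by (intro card_Diff_subset) (auto intro: finite_subset)
    then have "r \<le> card (W - (A \<union> C))" using AC W by simp
    then obtain D where D: "D \<subseteq> W - (A \<union> C)" "card D = r" by (meson obtain_subset_with_card_n)
    show ?goal
    proof (cases "P D")
      case True
      then show ?thesis using D C by (intro exI[of _ C] exI[of _ D]) auto
    next
      case False
      then show ?thesis using D A by (intro exI[of _ D] exI[of _ A]) auto
    qed
  qed
  have "A \<subseteq> W \<Longrightarrow> card A = r \<Longrightarrow> P A \<Longrightarrow> ?goal" for A
  proof (induction "card (A - A1)" arbitrary: A rule: less_induct)
    case (less A)
    have fin: "finite A" "finite A1" using less.prems A1 W by (auto intro: finite_subset)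
    have "\<not> A \<subseteq> A1"
      using card_subset_eq[OF fin(2)] less.prems A1 by metis
    then obtain x where x: "x \<in> A" "x \<notin> A1" by auto
    have "\<not> A1 \<subseteq> A"
      using card_subset_eq[OF fin(1)] less.prems A1 x by metis
    then obtain y where y: "y \<in> A1" "y \<notin> A" by auto
    define C where "C = insert y (A - {x})"
    have "card A > 0" using x fin by (auto simp: card_gt_0_iff)
    then have C: "C \<subseteq> W" "card C = r"
      using y x fin less.prems A1 unfolding C_def by (auto simp: card_Diff_singleton)
    have "C - A1 = (A - A1) - {x}" using y unfolding C_def by auto
    then have closer: "card (C - A1) < card (A - A1)"
      using x fin by (metis Diff_iff card_Diff1_less finite_Diff)
    show ?goal
    proof (cases "P C")
      case True
      then show ?thesis using less.hyps[OF closer C] by blast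
    next
      case False
      have "A \<union> C = insert y A" using x unfolding C_def by auto
      then have "card (A \<union> C) = r + 1" using y fin less.prems by simp
      then show ?thesis using adjacent[OF less.prems C False] by simp
    qed
  qed
  then have ?goal using A0 by blast
  then show ?thesis using that by (elim exE conjE)
qed

lemma matching_through_centers:
  assumes "finite T" "finite R" "T \<inter> R = {}" "card T * q \<le> card R"
  shows "\<exists>M. finite M \<and> card M = card T \<and> matching M \<and>
    (\<forall>e\<in>M. e \<subseteq> T \<union> R \<and> card e = Suc q \<and> e \<inter> T \<noteq> {})"
  using assms
proof (induction T arbitrary: R rule: finite_induct)
  case empty
  then show ?case by (intro exI[of _ "{}"]) (auto simp: matching_def)
next
  case (insert t T R)
  have "q \<le> card R" using insert.prems insert.hyps by simp
  then obtain D where D: "D \<subseteq> R" "card D = q" by (meson obtain_subset_with_card_n)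
  have "card T * q \<le> card (R - D)" "T \<inter> (R - D) = {}"
    using D insert by (auto simp: card_Diff_subset finite_subset)
  then obtain M where M: "finite M" "card M = card T" "matching M"
     "\<forall>e\<in>M. e \<subseteq> T \<union> (R - D) \<and> card e = Suc q \<and> e \<inter> T \<noteq> {}"
    using insert.IH[of "R - D"] insert.prems by auto
  have t: "t \<notin> R" "t \<notin> D" using insert.prems D by auto
  have new: "disjnt (insert t D) e" if "e \<in> M" for e
    using M(4) that t insert.hyps(2) insert.prems(2) D(1) unfolding disjnt_def by blast
  then have "insert t D \<notin> M" by (auto simp: disjnt_def)
  moreover have "card (insert t D) = Suc q" using D t insert.prems(1) by (simp add: finite_subset)
  ultimately show ?case
    using M new insert.hyps D(1)
    by (intro exI[of _ "insert (insert t D) M"])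
      (auto simp: matching_def pairwise_insert disjnt_sym)
qed

lemma extension_choice_uniform:
  assumes kg: "kgraph k (V, E)" and s: "matching_number (V, E) = s" and ij: "i \<noteq> j"
    and W: "finite W" "i \<notin> W" "j \<notin> W" "2 * (k - 1) < card W"
    and exactly_one: "\<And>A. A \<subseteq> W \<Longrightarrow> card A = k - 1 \<Longrightarrow> insert i A \<in> E \<longleftrightarrow> insert j A \<notin> E"
    and room: "\<And>X Y. X \<subseteq> W \<Longrightarrow> Y \<subseteq> W \<Longrightarrow> card X = k - 1 \<Longrightarrow> card Y = k - 1 \<Longrightarrow>
      X \<inter> Y = {} \<Longrightarrow> \<exists>M \<subseteq> E. finite M \<and> matching M \<and> card M + 1 = s \<and>
        (\<forall>e\<in>M. disjnt e (insert i X) \<and> disjnt e (insert j Y))"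
  shows "(\<forall>A\<in>{A. A \<subseteq> W \<and> card A = k - 1}. insert j A \<notin> E) \<or>
         (\<forall>A\<in>{A. A \<subseteq> W \<and> card A = k - 1}. insert j A \<in> E)"
proof (rule ccontr)
  assume "\<not> ?thesis"
  then obtain A0 A1 where A0: "A0 \<subseteq> W" "card A0 = k - 1" "insert j A0 \<in> E"
    and A1: "A1 \<subseteq> W" "card A1 = k - 1" "insert j A1 \<notin> E"
    by blast
  obtain X Y where XY: "X \<subseteq> W" "Y \<subseteq> W" "card X = k - 1" "card Y = k - 1" "X \<inter> Y = {}"
    and "insert j X \<notin> E" and Y_edge: "insert j Y \<in> E"
    by (rule disjoint_subsets_separating[OF W(1,4), where P = "\<lambda>A. insert j A \<in> E", OF A0 A1])
  then have X_edge: "insert i X \<in> E" using exactly_one by blast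
  obtain M where M: "M \<subseteq> E" "finite M" "matching M" "card M + 1 = s"
    and disj: "\<forall>e\<in>M. disjnt e (insert i X) \<and> disjnt e (insert j Y)"
    using room[OF XY] by blast
  have "disjnt (insert i X) (insert j Y)"
    using XY W ij unfolding disjnt_def by auto
  then have "card M + 2 \<le> matching_number (V, E)"
    using card_add_two_le_matching_number[OF kg, of M "insert i X" "insert j Y"] M disj X_edge Y_edge
    by simp
  then show False using s M(4) by simp
qed

lemma Cov_of_shift_Cov:
  assumes k: "k \<ge> 2" and n: "n \<noteq> 2 * k" and G: "(V, E) \<in> Mk k n s"
    and ij: "i \<in> V" "j \<in> V" "i \<noteq> j" and shifted: "(V, shift_edges i j E) \<in> Cov k n s"
  shows "(V, E) \<in> Cov k n s"
proof -
  let ?F = "shift_edges i j E"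
  have kg: "kgraph k (V, E)" and card_V: "card V = n" and s: "matching_number (V, E) = s"
    using G unfolding Mk_def Hk_def by auto
  have fin: "finite V" using kg unfolding kgraph_def by simp
  obtain S where S: "S \<subseteq> V" "card S = s" and F: "?F = {e. e \<subseteq> V \<and> card e = k \<and> e \<inter> S \<noteq> {}}"
    using shifted unfolding Cov_def by auto
  have card_swap: "card (insert i A) = card (insert j A)" if "i \<notin> A" "j \<notin> A" for A
    using that by (cases "finite A") auto
  have undone: ?thesis if "E = ?F \<or> E = image (transpose i j) ` ?F"
    using that
  proof
    assume E: "E = image (transpose i j) ` ?F"
    have "(V, image (transpose i j) ` ?F) \<in> Cov k n s"
      using Cov_bij_image[OF bij_transpose[of i j] _ shifted] ij by simp
    then show ?thesis by (simp only: E[symmetric])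
  qed (use shifted in simp)
  consider (symmetric) "i \<in> S \<longrightarrow> j \<in> S" | (few) "i \<in> S" "j \<notin> S" "n < (s + 1) * k"
    | (many) "i \<in> S" "j \<notin> S" "(s + 1) * k \<le> n" by linarith
  then show ?thesis
  proof cases
    case symmetric
    have "?F = E"
      by (rule shift_edges_eq_self_if_symmetric[OF ij(3)])
        (use card_swap ij symmetric in \<open>auto simp: F\<close>)
    then show ?thesis using undone by simp
  next
    case few
    have complete: "E = {e. e \<subseteq> V \<and> card e = k}"
      using Mk_complete_if_few_vertices[OF G few(3)] .
    have "?F = E"
      using card_swap ij(1) by (intro shift_edges_eq_self) (auto simp: complete)
    then show ?thesis using undone by simp
  next
    case many
    define W where "W = V - S - {j}"
    have W: "finite W" "i \<notin> W" "j \<notin> W" using fin many unfolding W_def by auto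
    have "card (V - S) = n - s" using S fin card_V by (simp add: card_Diff_subset finite_subset)
    then have card_W: "card W = n - s - 1" using many ij unfolding W_def by simp
    have "finite S" using S(1) fin by (rule finite_subset)
    then have "s \<ge> 1" using many(1) S(2) card_gt_0_iff[of S] by fastforce
    have big_W: "2 * (k - 1) < card W"
    proof (cases "s = 1")
      case True
      then show ?thesis using many n card_W k by simp
    next
      case False
      then obtain a where "s = 2 + a" using le_Suc_ex[of 2 s] \<open>s \<ge> 1\<close> by force
      moreover obtain b where "k = 2 + b" using le_Suc_ex[OF k] by blast
      ultimately show ?thesis using many card_W by (simp add: algebra_simps)
    qed
    have pending: "A \<in> {A. A \<subseteq> W \<and> card A = k - 1}"
      if "i \<notin> A" "j \<notin> A" "insert i A \<in> ?F" "insert j A \<notin> ?F" for A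
    proof -
      have sub: "insert i A \<subseteq> V" and card_iA: "card (insert i A) = k"
        using that(3) unfolding F by auto
      have "finite A" using finite_subset[OF sub fin] by simp
      then have "card A = k - 1" using card_iA that(1) by simp
      moreover have "A \<inter> S = {}"
        using that(4) sub ij(2) card_swap[OF that(1,2)] card_iA unfolding F by auto
      ultimately show ?thesis using sub that(2) unfolding W_def by auto
    qed
    have exactly_one: "insert i A \<in> E \<longleftrightarrow> insert j A \<notin> E" if "A \<subseteq> W" "card A = k - 1" for A
    proof -
      have A: "i \<notin> A" "j \<notin> A" using that W by auto
      have "finite A" using that W finite_subset by auto
      then have "insert i A \<in> ?F" "insert j A \<notin> ?F"
        using that A many k ij unfolding F W_def by auto
      then show ?thesis
        using shift_edges_insert_first[OF ij(3) A] shift_edges_insert_second[OF ij(3) A] by blast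
    qed
    have room: "\<exists>M \<subseteq> E. finite M \<and> matching M \<and> card M + 1 = s \<and>
        (\<forall>e\<in>M. disjnt e (insert i X) \<and> disjnt e (insert j Y))"
      if XY: "X \<subseteq> W" "Y \<subseteq> W" "card X = k - 1" "card Y = k - 1" "X \<inter> Y = {}" for X Y
    proof -
      define T where "T = S - {i}"
      define R where "R = W - (X \<union> Y)"
      have "card (X \<union> Y) = 2 * (k - 1)"
        using XY W by (simp add: card_Un_disjoint finite_subset)
      then have "card R = card W - 2 * (k - 1)"
        unfolding R_def using XY W by (simp add: card_Diff_subset finite_subset)
      moreover obtain a where "s = 1 + a" using le_Suc_ex[OF \<open>s \<ge> 1\<close>] by blast
      moreover obtain b where "k = 1 + b" using le_Suc_ex[of 1 k] k by force
      moreover have "card T = s - 1" using S many fin unfolding T_def by (simp add: finite_subset)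
      ultimately have bound: "card T * (k - 1) \<le> card R" using card_W many by (simp add: algebra_simps)
      have TR: "finite T" "finite R" "T \<inter> R = {}"
        using S fin W unfolding T_def R_def W_def by (auto simp: finite_subset)
      obtain M where M: "finite M" "card M = card T" "matching M"
        "\<forall>e\<in>M. e \<subseteq> T \<union> R \<and> card e = Suc (k - 1) \<and> e \<inter> T \<noteq> {}"
        using matching_through_centers[OF TR bound] by blast
      have "i \<notin> e" "j \<notin> e" "e \<in> ?F" if "e \<in> M" for e
        using M(4) that k S W many unfolding F T_def R_def W_def by auto
      then have "M \<subseteq> E" using shift_edges_avoiding by blast
      moreover have "\<forall>e\<in>M. disjnt e (insert i X) \<and> disjnt e (insert j Y)"
        using M(4) many XY unfolding T_def R_def W_def disjnt_def by blast
      ultimately show ?thesis using M \<open>card T = s - 1\<close> \<open>s \<ge> 1\<close> by auto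
    qed
    have "E = ?F \<or> E = image (transpose i j) ` ?F"
      by (rule shift_edges_undo[OF ij(3) pending
            extension_choice_uniform[OF kg s ij(3) W big_W exactly_one room]])
    then show ?thesis by (rule undone)
  qed
qed

lemma Cl_of_shift_Cl:
  assumes k: "k \<ge> 2" and n: "n \<noteq> 2 * k" and G: "(V, E) \<in> Mk k n s"
    and ij: "i \<in> V" "j \<in> V" "i \<noteq> j" and shifted: "(V, shift_edges i j E) \<in> Cl k n s"
  shows "(V, E) \<in> Cl k n s"
proof -
  let ?F = "shift_edges i j E"
  have kg: "kgraph k (V, E)" and card_V: "card V = n" and s: "matching_number (V, E) = s"
    and extremal: "card E = muk k n s"
    using G unfolding Mk_def Hk_def by auto
  have fin: "finite V" using kg unfolding kgraph_def by simp
  obtain T where T: "T \<subseteq> V" "card T = k * s + k - 1" and F: "?F = {e. e \<subseteq> T \<and> card e = k}"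
    using shifted unfolding Cl_def by auto
  have fin_T: "finite T" using T(1) fin by (rule finite_subset)
  have card_swap: "card (insert i A) = card (insert j A)" if "i \<notin> A" "j \<notin> A" for A
    using that by (cases "finite A") auto
  have undone: ?thesis if "E = ?F \<or> E = image (transpose i j) ` ?F"
    using that
  proof
    assume E: "E = image (transpose i j) ` ?F"
    have "(V, image (transpose i j) ` ?F) \<in> Cl k n s"
      using Cl_bij_image[OF bij_transpose[of i j] _ shifted] ij by simp
    then show ?thesis by (simp only: E[symmetric])
  qed (use shifted in simp)
  show ?thesis
  proof (cases "i \<in> T \<longrightarrow> j \<in> T")
    case True
    have "?F = E"
      by (rule shift_edges_eq_self_if_symmetric[OF ij(3)])
        (use card_swap True in \<open>auto simp: F\<close>)
    then show ?thesis using undone by simp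
  next
    case False
    then have iT: "i \<in> T" and jT: "j \<notin> T" by auto
    define W where "W = T - {i}"
    have W: "finite W" "i \<notin> W" "j \<notin> W" using fin_T jT unfolding W_def by auto
    have card_W: "card W = k * s + k - 2" using T iT fin_T unfolding W_def by simp
    have "s \<noteq> 1"
    proof
      assume "s = 1"
      have "card T < n" using T jT ij(2) fin card_V by (metis psubset_card_mono psubsetI subsetD)
      then have "2 * k < n" using T \<open>s = 1\<close> n by simp
      have "card E = card ?F" using card_shift_edges[OF kgraph_finite_edges[OF kg] ij(3)] by simp
      also have "\<dots> = (2 * k - 1) choose k"
        unfolding F using n_subsets[OF fin_T] T \<open>s = 1\<close> by (simp add: mult_2)
      also have "\<dots> < muk k n 1" by (rule binomial_lt_muk_one[OF k \<open>2 * k < n\<close>])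
      finally show False using extremal \<open>s = 1\<close> by simp
    qed
    have pending: "A \<in> {A. A \<subseteq> W \<and> card A = k - 1}"
      if "i \<notin> A" "j \<notin> A" "insert i A \<in> ?F" "insert j A \<notin> ?F" for A
    proof -
      have sub: "insert i A \<subseteq> T" and card_iA: "card (insert i A) = k"
        using that(3) unfolding F by auto
      have "finite A" using finite_subset[OF sub fin_T] by simp
      then show ?thesis using card_iA sub that(1) unfolding W_def by auto
    qed
    have exactly_one: "insert i A \<in> E \<longleftrightarrow> insert j A \<notin> E" if "A \<subseteq> W" "card A = k - 1" for A
    proof -
      have A: "i \<notin> A" "j \<notin> A" using that W by auto
      have "finite A" using that W finite_subset by auto
      then have "insert i A \<in> ?F" "insert j A \<notin> ?F"
        using that A iT jT k unfolding F W_def by auto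
      then show ?thesis
        using shift_edges_insert_first[OF ij(3) A] shift_edges_insert_second[OF ij(3) A] by blast
    qed
    consider "s = 0" | "s \<ge> 2" using \<open>s \<noteq> 1\<close> by linarith
    then have uniform: "(\<forall>A\<in>{A. A \<subseteq> W \<and> card A = k - 1}. insert j A \<notin> E) \<or>
        (\<forall>A\<in>{A. A \<subseteq> W \<and> card A = k - 1}. insert j A \<in> E)"
    proof cases
      case 1
      have "card A \<noteq> k - 1" if "A \<subseteq> W" for A
        using card_mono[OF W(1) that] card_W 1 k by simp
      then show ?thesis by blast
    next
      case 2
      have "2 * k \<le> k * s" using 2 by simp
      then have big_W: "2 * (k - 1) < card W" using card_W k by linarith
      have room: "\<exists>M \<subseteq> E. finite M \<and> matching M \<and> card M + 1 = s \<and>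
          (\<forall>e\<in>M. disjnt e (insert i X) \<and> disjnt e (insert j Y))"
        if XY: "X \<subseteq> W" "Y \<subseteq> W" "card X = k - 1" "card Y = k - 1" "X \<inter> Y = {}" for X Y
      proof -
        define R0 where "R0 = W - (X \<union> Y)"
        have "card (X \<union> Y) = 2 * (k - 1)"
          using XY W by (simp add: card_Un_disjoint finite_subset)
        then have "card R0 = card W - 2 * (k - 1)"
          unfolding R0_def using XY W by (simp add: card_Diff_subset finite_subset)
        moreover obtain a where "s = 1 + a" using le_Suc_ex[of 1 s] 2 by force
        moreover obtain b where "k = 1 + b" using le_Suc_ex[of 1 k] k by force
        ultimately have card_R0: "card R0 = (s - 1) + (s - 1) * (k - 1)"
          using card_W by (simp add: algebra_simps)
        then obtain C where C: "C \<subseteq> R0" "card C = s - 1"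
          by (metis le_add1 obtain_subset_with_card_n)
        define R where "R = R0 - C"
        have fin_R0: "finite R0" using W unfolding R0_def by simp
        have TR: "finite C" "finite R" "C \<inter> R = {}"
          using C fin_R0 unfolding R_def by (auto simp: finite_subset)
        have bound: "card C * (k - 1) \<le> card R"
          using C card_R0 fin_R0 unfolding R_def by (simp add: card_Diff_subset finite_subset)
        obtain M where M: "finite M" "card M = card C" "matching M"
          "\<forall>e\<in>M. e \<subseteq> C \<union> R \<and> card e = Suc (k - 1) \<and> e \<inter> C \<noteq> {}"
          using matching_through_centers[OF TR bound] by blast
        have sub: "e \<subseteq> R0" if "e \<in> M" for e using M(4) that C unfolding R_def by blast
        have "i \<notin> e" "j \<notin> e" "e \<in> ?F" if "e \<in> M" for e
          using sub[OF that] M(4) that k W unfolding F R0_def W_def by auto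
        then have "M \<subseteq> E" using shift_edges_avoiding by blast
        moreover have "\<forall>e\<in>M. disjnt e (insert i X) \<and> disjnt e (insert j Y)"
          using sub W unfolding R0_def disjnt_def by blast
        ultimately show ?thesis using M C 2 by auto
      qed
      show ?thesis by (rule extension_choice_uniform[OF kg s ij(3) W big_W exactly_one room])
    qed
    have "E = ?F \<or> E = image (transpose i j) ` ?F"
      by (rule shift_edges_undo[OF ij(3) pending uniform])
    then show ?thesis by (rule undone)
  qed
qed

theorem lemma5:
  fixes k n s i j :: nat and G :: hgraph
  assumes "k \<ge> 2" and "n \<noteq> 2 * k" and "G \<in> Mk k n s"
    and "i \<in> fst G" and "j \<in> fst G" and "i < j"
  shows "(shift i j G \<in> Cov k n s \<longrightarrow> G \<in> Cov k n s) \<and>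
         (shift i j G \<in> Cl k n s \<longrightarrow> G \<in> Cl k n s)"
proof -
  obtain V E where G: "G = (V, E)" by (cases G)
  have shift: "shift i j (V, E) = (V, shift_edges i j E)" by (simp add: shift_eq_shift_edges)
  have vertices: "i \<in> V" "j \<in> V" "i \<noteq> j" using assms(4-6) G by auto
  show ?thesis
    using Cov_of_shift_Cov[OF assms(1,2) _ vertices] Cl_of_shift_Cl[OF assms(1,2) _ vertices]
      assms(3) unfolding G shift by blast
qed

end
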